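(* For $n\ge 3$ let $C_n$ be the cycle graph with $n$ vertices, and let $\mathbb{Z}$ denote the one-dimensional integer lattice (the infinite 2-regular path graph on vertex set $\mathbb{Z}$ with edges $\{k,k+1\}$). Then for every complex $u$ with $|u|<1$, \[ \lim_{n\to\infty}\zeta_{C_n}(u)=\zeta_{\mathbb{Z}}(u). \]
   Context: For a vertex transitive $(q+1)$-regular graph $G$ and a fixed vertex $x_0$, the generalized Ihara zeta function is $\zeta_G(u)=\exp\big(\sum_{m\ge1}\frac{N^0_m}{m}u^m\big)$, where $N^0_m$ is the number of reduced $x_0$-cycles of length $m$ in $G$. Here a path of length $m$ is a sequence $(e_1,\ldots,e_m)$ of oriented edges (arcs) with the terminus of $e_i$ equal to the origin of $e_{i+1}$; it has a backtracking if $e_{i+1}=e_i^{-1}$ for some $i$ (where $e^{-1}$ is the reversed arc); an $x_0$-cycle is a path starting and ending at $x_0$; it has a tail if $e_m=e_1^{-1}$; it is reduced if it has neither a backtracking nor a tail. *)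

theory Defs
  imports Complex_Main
begin

text \<open>A graph is given by a symmetric adjacency relation on a vertex type.
  Arcs (oriented edges) are pairs (x, y) with adj x y; a path is a list of arcs.\<close>

definition rev_arc :: "'a \<times> 'a \<Rightarrow> 'a \<times> 'a" where
  "rev_arc e = (snd e, fst e)"

definition is_path :: "('a \<Rightarrow> 'a \<Rightarrow> bool) \<Rightarrow> ('a \<times> 'a) list \<Rightarrow> bool" where
  "is_path adj p \<longleftrightarrow> (\<forall>e\<in>set p. adj (fst e) (snd e)) \<and>
     (\<forall>i. Suc i < length p \<longrightarrow> snd (p ! i) = fst (p ! Suc i))"

definition is_cycle_at :: "('a \<Rightarrow> 'a \<Rightarrow> bool) \<Rightarrow> 'a \<Rightarrow> ('a \<times> 'a) list \<Rightarrow> bool" where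
  "is_cycle_at adj x0 p \<longleftrightarrow> is_path adj p \<and> p \<noteq> [] \<and> fst (hd p) = x0 \<and> snd (last p) = x0"

definition has_backtracking :: "('a \<times> 'a) list \<Rightarrow> bool" where
  "has_backtracking p \<longleftrightarrow> (\<exists>i. Suc i < length p \<and> p ! Suc i = rev_arc (p ! i))"

definition has_tail :: "('a \<times> 'a) list \<Rightarrow> bool" where
  "has_tail p \<longleftrightarrow> p \<noteq> [] \<and> last p = rev_arc (hd p)"

definition reduced_cycles :: "('a \<Rightarrow> 'a \<Rightarrow> bool) \<Rightarrow> 'a \<Rightarrow> nat \<Rightarrow> ('a \<times> 'a) list set" where
  "reduced_cycles adj x0 m = {p. length p = m \<and> is_cycle_at adj x0 p \<and>
      \<not> has_backtracking p \<and> \<not> has_tail p}"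

definition num_reduced_cycles :: "('a \<Rightarrow> 'a \<Rightarrow> bool) \<Rightarrow> 'a \<Rightarrow> nat \<Rightarrow> nat" where
  "num_reduced_cycles adj x0 m = card (reduced_cycles adj x0 m)"

definition ihara_zeta :: "('a \<Rightarrow> 'a \<Rightarrow> bool) \<Rightarrow> 'a \<Rightarrow> complex \<Rightarrow> complex" where
  "ihara_zeta adj x0 u =
     exp (\<Sum>m. of_nat (num_reduced_cycles adj x0 (Suc m)) / of_nat (Suc m) * u ^ Suc m)"

definition cycle_adj :: "nat \<Rightarrow> nat \<Rightarrow> nat \<Rightarrow> bool" where
  "cycle_adj n x y \<longleftrightarrow> x < n \<and> y < n \<and> (y = Suc x mod n \<or> x = Suc y mod n)"

definition int_adj :: "int \<Rightarrow> int \<Rightarrow> bool" where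
  "int_adj x y \<longleftrightarrow> \<bar>x - y\<bar> = 1"

end

(*
  In a 2-regular graph a reduced path is determined by its starting vertex and its first step:
  it keeps walking in one direction. On the integer line such a walk never returns to 0, so
  zeta_Z = 1. On C_n there are at most two reduced cycles of each length and none of length
  below n. Hence the coefficients of log zeta_{C_n} are uniformly bounded and eventually 0
  termwise, and Tannery's theorem lets the limit pass through the series.
*)
theory Submission
  imports Defs "HOL-Analysis.Uniform_Limit"
begin

definition walk :: "(int \<Rightarrow> 'a) \<Rightarrow> int \<Rightarrow> nat \<Rightarrow> ('a \<times> 'a) list" where
  "walk g d m = map (\<lambda>i. (g (d * int i), g (d * int (Suc i)))) [0..<m]"

text \<open>The hypothesis on \<open>g\<close> below says that \<open>g\<close> is a covering of the graph by the integer
  line, e.g. reduction mod \<open>n\<close> onto \<open>C\<^sub>n\<close>: non-backtracking paths then lift uniquely once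
  their first step is chosen.\<close>

lemma non_backtracking_path_eq_walk:
  fixes g :: "int \<Rightarrow> 'a"
  assumes cover: "\<And>k y. adj (g k) y \<longleftrightarrow> y = g (k + 1) \<or> y = g (k - 1)"
    and path: "is_path adj p" and "\<not> has_backtracking p" and start: "fst (hd p) = g 0"
  shows "\<exists>d\<in>{1, -1}. p = walk g d (length p)"
proof (cases "p = []")
  case True
  then show ?thesis by (intro bexI[of _ 1]) (auto simp: walk_def)
next
  case False
  have arc: "adj (fst (p ! i)) (snd (p ! i))" if "i < length p" for i
    using path that unfolding is_path_def by (metis nth_mem)
  have "fst (p ! 0) = g 0" using start False by (simp add: hd_conv_nth)
  with arc[of 0] False cover obtain d where d: "d \<in> {1, -1}" "snd (p ! 0) = g d"
    by force
  have "p ! i = (g (d * int i), g (d * int (Suc i)))" if "i < length p" for i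
    using that
  proof (induction i)
    case 0
    with \<open>fst (p ! 0) = g 0\<close> d show ?case by (simp add: prod_eq_iff)
  next
    case (Suc i)
    then have prev: "p ! i = (g (d * int i), g (d * int (Suc i)))" by simp
    have head: "fst (p ! Suc i) = g (d * int (Suc i))"
      using path Suc.prems prev unfolding is_path_def by auto
    have "p ! Suc i \<noteq> rev_arc (p ! i)"
      using \<open>\<not> has_backtracking p\<close> Suc.prems unfolding has_backtracking_def by blast
    then have "snd (p ! Suc i) \<noteq> g (d * int i)"
      using head prev by (auto simp: rev_arc_def prod_eq_iff)
    moreover have
      "snd (p ! Suc i) = g (d * int (Suc i) + 1) \<or> snd (p ! Suc i) = g (d * int (Suc i) - 1)"
      using arc[OF Suc.prems] head cover by simp
    ultimately have "snd (p ! Suc i) = g (d * int (Suc (Suc i)))"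
      using d(1) by (auto simp: algebra_simps)
    with head show ?case by (simp add: prod_eq_iff)
  qed
  then have "p = walk g d (length p)"
    by (intro nth_equalityI) (auto simp: walk_def)
  with d(1) show ?thesis by blast
qed

lemma reduced_cycle_eq_closed_walk:
  fixes g :: "int \<Rightarrow> 'a"
  assumes cover: "\<And>k y. adj (g k) y \<longleftrightarrow> y = g (k + 1) \<or> y = g (k - 1)"
    and p: "p \<in> reduced_cycles adj (g 0) m"
  shows "\<exists>d\<in>{1, -1}. p = walk g d m \<and> g (d * int m) = g 0 \<and> m > 0"
proof -
  from p have cycle: "is_cycle_at adj (g 0) p" and len: "length p = m"
    and "\<not> has_backtracking p"
    unfolding reduced_cycles_def by auto
  then obtain d where d: "d \<in> {1, -1}" "p = walk g d m"
    using non_backtracking_path_eq_walk[OF cover] unfolding is_cycle_at_def by blast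
  from cycle have "m > 0" and "snd (last p) = g 0"
    using len unfolding is_cycle_at_def by auto
  moreover have "snd (last p) = g (d * int m)"
    using d(2) \<open>m > 0\<close> by (simp add: walk_def last_map)
  ultimately show ?thesis using d by auto
qed

lemma num_reduced_cycles_le_two:
  fixes g :: "int \<Rightarrow> 'a"
  assumes cover: "\<And>k y. adj (g k) y \<longleftrightarrow> y = g (k + 1) \<or> y = g (k - 1)"
  shows "num_reduced_cycles adj (g 0) m \<le> 2"
proof -
  have "reduced_cycles adj (g 0) m \<subseteq> (\<lambda>d. walk g d m) ` {1, -1}"
    using reduced_cycle_eq_closed_walk[OF cover] by blast
  then have "num_reduced_cycles adj (g 0) m \<le> card ((\<lambda>d. walk g d m) ` {1, -1})"
    unfolding num_reduced_cycles_def by (intro card_mono) auto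
  also have "\<dots> \<le> 2"
    using card_image_le[of "{1, -1}" "\<lambda>d. walk g d m"] by simp
  finally show ?thesis .
qed

lemma num_reduced_cycles_int: "num_reduced_cycles int_adj 0 m = 0"
proof -
  have cover: "int_adj k y \<longleftrightarrow> y = k + 1 \<or> y = k - 1" for k y
    by (auto simp: int_adj_def abs_if)
  have "reduced_cycles int_adj 0 m = {}"
    using reduced_cycle_eq_closed_walk[of int_adj "\<lambda>k. k"] cover by fastforce
  then show ?thesis by (simp add: num_reduced_cycles_def)
qed

lemma cycle_adj_mod_iff:
  assumes "n > 0"
  shows "cycle_adj n (nat (k mod int n)) y \<longleftrightarrow>
    y = nat ((k + 1) mod int n) \<or> y = nat ((k - 1) mod int n)"
proof -
  define x where "x = nat (k mod int n)"
  have x: "int x = k mod int n" "x < n"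
    using assms by (auto simp: x_def nat_less_iff)
  have "y = Suc x mod n \<longleftrightarrow> int y = (k + 1) mod int n"
    using x(1) by (metis mod_add_left_eq of_nat_Suc of_nat_mod add.commute of_nat_eq_iff)
  moreover have "y < n \<and> x = Suc y mod n \<longleftrightarrow> int y = (k - 1) mod int n"
  proof -
    have "x = Suc y mod n \<longleftrightarrow> int x = int (Suc y mod n)"
      by (rule of_nat_eq_iff[symmetric])
    also have "\<dots> \<longleftrightarrow> k mod int n = (int y + 1) mod int n"
      using x(1) by (simp add: of_nat_mod add.commute)
    also have "\<dots> \<longleftrightarrow> (k - 1) mod int n = int y mod int n"
      by (simp add: mod_eq_dvd_iff algebra_simps)
    finally have "x = Suc y mod n \<longleftrightarrow> (k - 1) mod int n = int y mod int n" .
    moreover have "int y = (k - 1) mod int n \<Longrightarrow> y < n"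
      using assms by (metis of_nat_less_iff pos_mod_bound of_nat_0_less_iff)
    ultimately show ?thesis by auto
  qed
  moreover have "cycle_adj n x y \<longleftrightarrow> y = Suc x mod n \<or> y < n \<and> x = Suc y mod n"
    using x(2) assms by (auto simp: cycle_adj_def)
  moreover have "int y = j mod int n \<longleftrightarrow> y = nat (j mod int n)" for j
    using assms by auto
  ultimately show ?thesis
    by (simp add: x_def)
qed

lemma num_reduced_cycles_cycle_eq_0:
  assumes "m < n"
  shows "num_reduced_cycles (cycle_adj n) 0 m = 0"
proof -
  let ?g = "\<lambda>k. nat (k mod int n)"
  have "reduced_cycles (cycle_adj n) (?g 0) m = {}"
  proof (rule equals0I)
    fix p assume "p \<in> reduced_cycles (cycle_adj n) (?g 0) m"
    then obtain d :: int where "d \<in> {1, -1}" "?g (d * int m) = 0" "m > 0"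
      using reduced_cycle_eq_closed_walk[of "cycle_adj n" ?g] cycle_adj_mod_iff assms by force
    moreover have "(d * int m) mod int n \<ge> 0"
      using assms by simp
    ultimately have "(d * int m) mod int n = 0"
      by simp
    then have "int n dvd int m"
      using \<open>d \<in> {1, -1}\<close> by auto
    with \<open>m > 0\<close> assms show False by (auto dest: dvd_imp_le)
  qed
  then show ?thesis by (simp add: num_reduced_cycles_def)
qed

lemma num_reduced_cycles_cycle_le_two:
  assumes "n > 0"
  shows "num_reduced_cycles (cycle_adj n) 0 m \<le> 2"
  using num_reduced_cycles_le_two[of "cycle_adj n" "\<lambda>k. nat (k mod int n)"]
    cycle_adj_mod_iff[OF assms] by simp

lemma tendsto_ihara_zeta:
  fixes adj :: "'i \<Rightarrow> 'a \<Rightarrow> 'a \<Rightarrow> bool" and adj' :: "'b \<Rightarrow> 'b \<Rightarrow> bool" and C :: nat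
  assumes coeffs:
      "\<And>m. eventually (\<lambda>i. num_reduced_cycles (adj i) (x i) m = num_reduced_cycles adj' x' m) F"
    and bounded: "eventually (\<lambda>i. \<forall>m. num_reduced_cycles (adj i) (x i) m \<le> C) F"
    and u: "norm u < 1" and nontrivial: "F \<noteq> bot"
  shows "((\<lambda>i. ihara_zeta (adj i) (x i) u) \<longlongrightarrow> ihara_zeta adj' x' u) F"
proof -
  define a where
    "a k i = of_nat (num_reduced_cycles (adj i) (x i) (Suc k)) / of_nat (Suc k) * u ^ Suc k" for k i
  define b where
    "b k = of_nat (num_reduced_cycles adj' x' (Suc k)) / of_nat (Suc k) * u ^ Suc k" for k
  have limit: "((\<lambda>i. a k i) \<longlongrightarrow> b k) F" for k
    using coeffs[of "Suc k"]
    by (intro tendsto_eventually) (auto simp: a_def b_def elim: eventually_mono)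
  have norm_bound: "norm (a k i) \<le> C * norm u ^ Suc k"
    if "num_reduced_cycles (adj i) (x i) (Suc k) \<le> C" for k i
  proof -
    have "norm (a k i) = num_reduced_cycles (adj i) (x i) (Suc k) / Suc k * norm u ^ Suc k"
      by (simp add: a_def norm_mult norm_divide norm_power del: of_nat_Suc)
    also have "\<dots> \<le> num_reduced_cycles (adj i) (x i) (Suc k) * norm u ^ Suc k"
      by (intro mult_right_mono) (auto simp: divide_le_eq mult_le_cancel_left1)
    also have "\<dots> \<le> C * norm u ^ Suc k"
      using that by (intro mult_right_mono) auto
    finally show ?thesis .
  qed
  have bound: "eventually (\<lambda>(k, i). norm (a k i) \<le> C * norm u ^ Suc k) (at_top \<times>\<^sub>F F)"
    using eventually_prodI[OF eventually_True[of sequentially] bounded]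
    by (rule eventually_mono) (auto intro: norm_bound simp del: power_Suc)
  have summable: "summable (\<lambda>k. C * norm u ^ Suc k)"
    using u by (intro summable_mult summable_geometric_iff[THEN iffD2]) simp
  have "((\<lambda>i. \<Sum>k. a k i) \<longlongrightarrow> (\<Sum>k. b k)) F"
    using tannerys_theorem[of a b, OF limit bound summable nontrivial] by blast
  then show ?thesis
    unfolding ihara_zeta_def a_def b_def by (rule tendsto_exp)
qed

theorem theorem4:
  fixes u :: complex
  assumes "norm u < 1"
  shows "(\<lambda>n. ihara_zeta (cycle_adj n) 0 u) \<longlonglongrightarrow> ihara_zeta int_adj 0 u"
proof (rule tendsto_ihara_zeta)
  show "\<forall>\<^sub>F n in sequentially.
          num_reduced_cycles (cycle_adj n) 0 m = num_reduced_cycles int_adj 0 m" for m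
    using eventually_gt_at_top[of m]
    by (rule eventually_mono) (simp add: num_reduced_cycles_cycle_eq_0 num_reduced_cycles_int)
  show "\<forall>\<^sub>F n in sequentially. \<forall>m. num_reduced_cycles (cycle_adj n) 0 m \<le> 2"
    using eventually_gt_at_top[of 0]
    by (rule eventually_mono) (simp add: num_reduced_cycles_cycle_le_two)
qed (use assms in simp_all)

end
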